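(* Let $X,Y$ be real Banach spaces and let $f\in C^1(X;Y)$. Assume: (i) $f'(x)\in \mathrm{Isom}(X;Y)$ for every $x\in X$; (ii) $\sup_{\|x\|\le r}\|f'(x)^{-1}\|<+\infty$ for every $r$ with $0<r<+\infty$; (iii) there exist a point $x_0\in X$ and a locally Lipschitz continuous coercive function $k:X\to\mathbb{R}_+$ which admits all right directional derivatives $D^+_v k(x)$ ($x,v\in X$), such that $$\sup\bigl\{D^+_v k(x) : v=-f'(x)^{-1}(f(x)-f(x_0)),\ x\in X\bigr\}<+\infty.$$ Then $f$ is a global diffeomorphism $X\to f(X)$ (in particular $f$ is injective). Moreover, the range $f(X)$ is star shaped around $f(x_0)$: if $y\in f(X)$ and $s\in[0,1]$, then $f(x_0)+s(y-f(x_0))\in f(X)$. When $k\in C^1$, condition (iii) reads $$\sup_{x\in X}\bigl(-k'(x)f'(x)^{-1}(f(x)-f(x_0))\bigr)<+\infty.$$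
   Context: $\mathrm{Isom}(X;Y)$ denotes the set of bounded linear isomorphisms (with bounded inverse) from $X$ onto $Y$. $\mathbb{R}_+=[0,+\infty)$. A function $k:X\to\mathbb{R}_+$ is called coercive if it is continuous and $k(x)\to+\infty$ as $\|x\|\to+\infty$. The right directional derivative is $D^+_v k(x):=\lim_{s\to 0^+}\frac{k(x+sv)-k(x)}{s}$, assumed to exist for all $x,v\in X$. *)

theory Defs
  imports "HOL-Analysis.Analysis"
begin

definition is_isom :: "('a::real_normed_vector \<Rightarrow>\<^sub>L 'b::real_normed_vector) \<Rightarrow> bool" where
  "is_isom L \<longleftrightarrow> (\<exists>M. M o\<^sub>L L = id_blinfun \<and> L o\<^sub>L M = id_blinfun)"

definition blinfun_inv :: "('a::real_normed_vector \<Rightarrow>\<^sub>L 'b::real_normed_vector) \<Rightarrow> ('b \<Rightarrow>\<^sub>L 'a)" where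
  "blinfun_inv L = (SOME M. M o\<^sub>L L = id_blinfun \<and> L o\<^sub>L M = id_blinfun)"

definition right_dir_deriv :: "('a::real_normed_vector \<Rightarrow> real) \<Rightarrow> 'a \<Rightarrow> 'a \<Rightarrow> real" where
  "right_dir_deriv k x v = Lim (at_right 0) (\<lambda>s. (k (x + s *\<^sub>R v) - k x) / s)"

definition has_right_dir_derivs :: "('a::real_normed_vector \<Rightarrow> real) \<Rightarrow> bool" where
  "has_right_dir_derivs k \<longleftrightarrow>
     (\<forall>x v. \<exists>l. ((\<lambda>s. (k (x + s *\<^sub>R v) - k x) / s) \<longlongrightarrow> l) (at_right 0))"

definition locally_lipschitz :: "('a::metric_space \<Rightarrow> 'b::metric_space) \<Rightarrow> bool" where
  "locally_lipschitz k \<longleftrightarrow> (\<forall>x. \<exists>U L. open U \<and> x \<in> U \<and> L-lipschitz_on U k)"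

definition coercive :: "('a::real_normed_vector \<Rightarrow> real) \<Rightarrow> bool" where
  "coercive k \<longleftrightarrow> continuous_on UNIV k \<and> filterlim k at_top at_infinity"

definition C1_on :: "'a::real_normed_vector set \<Rightarrow> ('a \<Rightarrow> 'b::real_normed_vector) \<Rightarrow> bool" where
  "C1_on S f \<longleftrightarrow> (\<exists>f'. (\<forall>x\<in>S. (f has_derivative blinfun_apply (f' x)) (at x)) \<and> continuous_on S f')"

end

theory Submission
  imports Defs
begin

(*
  By the Banach fixed point theorem f is a local diffeomorphism, so continuous paths in its range
  lift uniquely.  For every x the path t \<mapsto> f x0 + exp (-t) *\<^sub>R (f x - f x0), which runs from f x
  towards f x0 along a segment, lifts to a solution of the continuous Newton equation
  \<gamma>' = - f'(\<gamma>)\<^sup>-\<^sup>1 (f \<gamma> - f x0) on all of [0, \<infinity>): along the lift k grows at most linearly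
  (a Dini derivative estimate), so by coercivity the lift stays bounded, hence is Lipschitz and can
  be continued past every finite time.  Evaluating the lift at t = - ln s gives the star shape of
  the range.  Lifts depend continuously on their initial point, so the set of points whose flow
  enters a neighbourhood of x0 on which f has a local inverse is open; it is also closed and
  nonempty, hence everything.  Two points with the same image have flows with the same image,
  which agree once they are inside that neighbourhood, so by uniqueness of lifts the points agree.
  The inverse of f is C1 with derivative f'(f\<^sup>-\<^sup>1 y)\<^sup>-\<^sup>1.
*)

lemma is_isom_inv:
  assumes "is_isom L"
  shows "blinfun_inv L o\<^sub>L L = id_blinfun" and "L o\<^sub>L blinfun_inv L = id_blinfun"
  using someI_ex[OF assms[unfolded is_isom_def]] unfolding blinfun_inv_def by auto

lemma nonneg_real_induct[consumes 1, case_names limit step]: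
  fixes P :: "real \<Rightarrow> bool"
  assumes "0 \<le> t"
    and limit: "\<And>t. 0 \<le> t \<Longrightarrow> (\<And>s. 0 \<le> s \<Longrightarrow> s < t \<Longrightarrow> P s) \<Longrightarrow> P t"
    and step: "\<And>t. 0 \<le> t \<Longrightarrow> P t \<Longrightarrow> \<exists>d>0. \<forall>s. t < s \<and> s < t + d \<longrightarrow> P s"
  shows "P t"
proof (rule ccontr)
  define N where "N = {t. 0 \<le> t \<and> \<not> P t}"
  assume "\<not> P t"
  then have "t \<in> N" using \<open>0 \<le> t\<close> by (simp add: N_def)
  have bdd: "bdd_below N" by (auto simp: N_def bdd_below_def)
  define m where "m = Inf N"
  have m0: "0 \<le> m" unfolding m_def using \<open>t \<in> N\<close> by (intro cInf_greatest) (auto simp: N_def)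
  have below: "P s" if "0 \<le> s" "s < m" for s
    using cInf_lower[OF _ bdd, of s] that by (force simp: N_def m_def)
  then have "P m" using limit m0 by blast
  then obtain d where "d > 0" and d: "\<And>s. m < s \<Longrightarrow> s < m + d \<Longrightarrow> P s" using step m0 by blast
  have "m + d \<le> n" if "n \<in> N" for n
    using cInf_lower[OF that bdd] d[of n] that \<open>P m\<close> by (force simp: N_def m_def)
  then have "m + d \<le> m" unfolding m_def using \<open>t \<in> N\<close> by (intro cInf_greatest) auto
  then show False using \<open>d > 0\<close> by simp
qed

lemma continuous_right_slope_bound:
  fixes \<phi> :: "real \<Rightarrow> real"
  assumes cont: "continuous_on {0..T} \<phi>"
    and slope: "\<And>t. 0 \<le> t \<Longrightarrow> t < T \<Longrightarrow> \<exists>d>0. \<forall>h. 0 < h \<and> h < d \<longrightarrow> \<phi> (t + h) \<le> \<phi> t + c * h"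
    and t: "t \<in> {0..T}"
  shows "\<phi> t \<le> \<phi> 0 + c * t"
proof -
  have "t \<le> T \<longrightarrow> \<phi> t \<le> \<phi> 0 + c * t" if "0 \<le> t" for t
    using that
  proof (induction t rule: nonneg_real_induct)
    case (limit t)
    show ?case
    proof (cases "t = 0")
      case False
      show ?thesis
      proof
        assume "t \<le> T"
        have "continuous_on (closure {0..<t}) (\<lambda>s. \<phi> s - c * s)"
          using False limit(1) \<open>t \<le> T\<close>
          by (intro continuous_intros continuous_on_subset[OF cont]) auto
        then have "\<phi> t - c * t \<le> \<phi> 0"
          by (rule continuous_le_on_closure) (use False limit \<open>t \<le> T\<close> in force)+
        then show "\<phi> t \<le> \<phi> 0 + c * t" by simp
      qed
    qed simp
  next
    case (step t)
    show ?case
    proof (cases "t < T")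
      case True
      then obtain d where "d > 0" and d: "\<And>h. 0 < h \<Longrightarrow> h < d \<Longrightarrow> \<phi> (t + h) \<le> \<phi> t + c * h"
        using slope[OF step(1)] by blast
      have "\<phi> s \<le> \<phi> 0 + c * s" if "t < s" "s < t + d" "s \<le> T" for s
        using d[of "s - t"] step that True by (auto simp: algebra_simps)
      then show ?thesis using \<open>d > 0\<close> by blast
    qed (auto intro: exI[of _ 1])
  qed
  then show ?thesis using t by auto
qed

lemma continuous_right_dini_bound:
  fixes \<phi> :: "real \<Rightarrow> real"
  assumes cont: "continuous_on {0..T} \<phi>"
    and dini: "\<And>t e. 0 \<le> t \<Longrightarrow> t < T \<Longrightarrow> e > 0 \<Longrightarrow>
       \<exists>d>0. \<forall>h. 0 < h \<and> h < d \<longrightarrow> \<phi> (t + h) \<le> \<phi> t + (C + e) * h"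
    and t: "t \<in> {0..T}"
  shows "\<phi> t \<le> \<phi> 0 + C * t"
proof (cases "t = 0")
  case False
  then have "t > 0" using t by simp
  show ?thesis
  proof (rule field_le_epsilon)
    fix e :: real assume "e > 0"
    then have "\<phi> t \<le> \<phi> 0 + (C + e / t) * t"
      using continuous_right_slope_bound[OF cont dini t] \<open>t > 0\<close> by simp
    then show "\<phi> t \<le> \<phi> 0 + C * t + e" using \<open>t > 0\<close> by (simp add: algebra_simps)
  qed
qed simp

lemma lipschitz_on_near_shift:
  fixes k :: "'a::real_normed_vector \<Rightarrow> real"
  assumes lip: "L-lipschitz_on U k" and "ball z r \<subseteq> U"
    and close: "norm (p - (z + v)) \<le> \<epsilon>" and "norm v + \<epsilon> < r"
  shows "k p - k (z + v) \<le> L * \<epsilon>"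
proof -
  have "norm (p - z) \<le> \<epsilon> + norm v"
    using close norm_triangle_ineq[of "p - (z + v)" v] by simp
  moreover have "0 \<le> \<epsilon>" using close norm_ge_zero order_trans by blast
  ultimately have "z + v \<in> ball z r" "p \<in> ball z r"
    using \<open>norm v + \<epsilon> < r\<close> by (simp_all add: dist_norm norm_minus_commute)
  then have "z + v \<in> U" "p \<in> U" using \<open>ball z r \<subseteq> U\<close> by blast+
  then have "dist (k p) (k (z + v)) \<le> L * dist p (z + v)"
    using lipschitz_onD[OF lip] by blast
  then have "k p - k (z + v) \<le> L * dist p (z + v)"
    by (simp add: dist_real_def abs_le_iff)
  also have "\<dots> \<le> L * \<epsilon>"
    using close lipschitz_on_nonneg[OF lip] by (simp add: dist_norm mult_left_mono)
  finally show ?thesis .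
qed

lemma lipschitz_comp_right_dini:
  fixes k :: "'a::real_normed_vector \<Rightarrow> real" and \<gamma> :: "real \<Rightarrow> 'a"
  assumes lip: "L-lipschitz_on U k" and "open U" "\<gamma> s \<in> U"
    and deriv: "(\<gamma> has_derivative (\<lambda>h. h *\<^sub>R w)) (at s within {s..s + d0})" and "0 < d0"
    and dir: "((\<lambda>h. (k (\<gamma> s + h *\<^sub>R w) - k (\<gamma> s)) / h) \<longlongrightarrow> l) (at_right 0)"
    and "e > 0"
  shows "\<exists>d>0. \<forall>h. 0 < h \<and> h < d \<longrightarrow> k (\<gamma> (s + h)) \<le> k (\<gamma> s) + (l + e) * h"
proof -
  define z where "z = \<gamma> s"
  have "0 \<le> L" using lipschitz_on_nonneg[OF lip] .
  obtain d1 where "d1 > 0" and d1: "\<And>h. 0 < h \<Longrightarrow> h < d1 \<Longrightarrow> (k (z + h *\<^sub>R w) - k z) / h < l + e / 2"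
    using order_tendstoD(2)[OF dir, of "l + e / 2"] \<open>e > 0\<close>
    unfolding eventually_at_right_field z_def by auto
  obtain r where "r > 0" and r: "ball z r \<subseteq> U"
    using \<open>open U\<close> \<open>\<gamma> s \<in> U\<close> open_contains_ball unfolding z_def by blast
  define \<epsilon> where "\<epsilon> = e / (2 * (L + 1))"
  have "\<epsilon> > 0" and L\<epsilon>: "L * \<epsilon> \<le> e / 2"
    using \<open>e > 0\<close> \<open>0 \<le> L\<close> by (auto simp: \<epsilon>_def field_simps)
  obtain d2 where "d2 > 0" and d2: "\<And>y. y \<in> {s..s + d0} \<Longrightarrow> norm (y - s) < d2 \<Longrightarrow>
      norm (\<gamma> y - z - (y - s) *\<^sub>R w) \<le> \<epsilon> * norm (y - s)"
    using deriv \<open>\<epsilon> > 0\<close> unfolding has_derivative_within_alt z_def by blast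
  define d where "d = Min {d0, d1, d2, r / (norm w + \<epsilon> + 1)}"
  have "d > 0"
    using \<open>0 < d0\<close> \<open>d1 > 0\<close> \<open>d2 > 0\<close> \<open>r > 0\<close> \<open>\<epsilon> > 0\<close> by (simp add: d_def add_nonneg_pos)
  moreover have "k (\<gamma> (s + h)) \<le> k z + (l + e) * h" if "0 < h" "h < d" for h
  proof -
    have h: "h < d0" "h < d1" "h < d2" "h * (norm w + \<epsilon> + 1) < r"
      using that \<open>\<epsilon> > 0\<close> by (auto simp: d_def pos_less_divide_eq add_nonneg_pos)
    have close: "norm (\<gamma> (s + h) - (z + h *\<^sub>R w)) \<le> \<epsilon> * h"
      using d2[of "s + h"] h that by (simp add: algebra_simps)
    have "norm (h *\<^sub>R w) + \<epsilon> * h < r"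
      using h(4) that by (simp add: algebra_simps)
    then have "k (\<gamma> (s + h)) - k (z + h *\<^sub>R w) \<le> L * (\<epsilon> * h)"
      by (rule lipschitz_on_near_shift[OF lip r close])
    also have "\<dots> \<le> e / 2 * h" using L\<epsilon> that by (simp add: mult.assoc[symmetric])
    finally have "k (\<gamma> (s + h)) - k (z + h *\<^sub>R w) \<le> e / 2 * h" .
    moreover have "k (z + h *\<^sub>R w) - k z \<le> (l + e / 2) * h"
      using d1[OF that(1) h(2)] that by (simp add: pos_divide_less_eq)
    ultimately show ?thesis by (simp add: algebra_simps)
  qed
  ultimately show ?thesis unfolding z_def by blast
qed

lemma coercive_sublevel_bounded:
  assumes "coercive k"
  shows "\<exists>R>0. \<forall>z. k z \<le> B \<longrightarrow> norm z < R"
proof -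
  have "\<forall>\<^sub>F z in at_infinity. B < k z"
    using assms unfolding coercive_def filterlim_at_top_dense by auto
  then obtain b where b: "\<And>z. b \<le> norm z \<Longrightarrow> B < k z" unfolding eventually_at_infinity by auto
  show ?thesis by (rule exI[of _ "max b 1"]) (use b in \<open>force simp: not_le[symmetric]\<close>)
qed

lemma continuous_lifts_eq:
  fixes f :: "'a::real_normed_vector \<Rightarrow> 'b::real_normed_vector"
    and \<gamma> \<eta> :: "'c::topological_space \<Rightarrow> 'a"
  assumes loc_inj: "\<And>x. \<exists>e>0. inj_on f (ball x e)"
    and "connected J" and cont: "continuous_on J \<gamma>" "continuous_on J \<eta>"
    and lift: "\<And>t. t \<in> J \<Longrightarrow> f (\<gamma> t) = f (\<eta> t)"
    and "s \<in> J" "\<gamma> s = \<eta> s" and "t \<in> J"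
  shows "\<gamma> t = \<eta> t"
proof -
  define E where "E = {t\<in>J. \<gamma> t - \<eta> t = 0}"
  have "closedin (top_of_set J) E"
    unfolding E_def using cont by (intro continuous_closedin_preimage_constant continuous_intros)
  moreover have "openin (top_of_set J) E"
  proof (rule openin_subopen[THEN iffD2], intro ballI)
    fix t assume "t \<in> E"
    obtain e where "e > 0" and inj: "inj_on f (ball (\<gamma> t) e)" using loc_inj by blast
    define V where "V = (J \<inter> \<gamma> -` ball (\<gamma> t) e) \<inter> (J \<inter> \<eta> -` ball (\<gamma> t) e)"
    have "openin (top_of_set J) V"
      unfolding V_def using cont by (intro openin_Int continuous_openin_preimage_gen open_ball)
    moreover have "V \<subseteq> E"
      using inj lift unfolding V_def E_def by (auto dest: inj_onD)
    ultimately show "\<exists>V. openin (top_of_set J) V \<and> t \<in> V \<and> V \<subseteq> E"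
      using \<open>t \<in> E\<close> \<open>e > 0\<close> unfolding V_def E_def by auto
  qed
  moreover have "E \<noteq> {}" using assms unfolding E_def by auto
  ultimately have "E = J" using \<open>connected J\<close> unfolding connected_clopen by blast
  then show ?thesis using \<open>t \<in> J\<close> unfolding E_def by auto
qed

definition local_inverse ::
    "('a::real_normed_vector \<Rightarrow> 'b::real_normed_vector) \<Rightarrow> 'a \<Rightarrow> real \<Rightarrow> real \<Rightarrow> real \<Rightarrow> ('b \<Rightarrow> 'a) \<Rightarrow> bool"
  where "local_inverse f a \<delta> \<rho> K g \<longleftrightarrow> 0 < \<delta> \<and> 0 < \<rho> \<and> 0 < K \<and>
     (\<forall>x1\<in>ball a \<delta>. \<forall>x2\<in>ball a \<delta>. norm (x1 - x2) \<le> K * norm (f x1 - f x2)) \<and>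
     (\<forall>y\<in>ball (f a) \<rho>. g y \<in> ball a \<delta> \<and> f (g y) = y)"

context
  fixes f :: "'a::real_normed_vector \<Rightarrow> 'b::real_normed_vector"
    and a \<delta> \<rho> K g
  assumes loc: "local_inverse f a \<delta> \<rho> K g"
begin

lemma local_inverse_pos: "0 < \<delta>" "0 < \<rho>" "0 < K"
  using loc unfolding local_inverse_def by auto

lemma local_inverse_right: "y \<in> ball (f a) \<rho> \<Longrightarrow> g y \<in> ball a \<delta> \<and> f (g y) = y"
  using loc unfolding local_inverse_def by auto

lemma local_inverse_expansive:
  "x1 \<in> ball a \<delta> \<Longrightarrow> x2 \<in> ball a \<delta> \<Longrightarrow> norm (x1 - x2) \<le> K * norm (f x1 - f x2)"
  using loc unfolding local_inverse_def by auto

lemma local_inverse_inj_on: "inj_on f (ball a \<delta>)"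
  by (rule inj_onI) (use local_inverse_expansive in fastforce)

lemma local_inverse_left: "z \<in> ball a \<delta> \<Longrightarrow> f z \<in> ball (f a) \<rho> \<Longrightarrow> g (f z) = z"
  using local_inverse_right[of "f z"] local_inverse_inj_on by (auto dest: inj_onD)

lemma local_inverse_centre: "g (f a) = a"
  using local_inverse_left local_inverse_pos by simp

lemma local_inverse_lipschitz: "K-lipschitz_on (ball (f a) \<rho>) g"
  by (rule lipschitz_onI)
    (use local_inverse_right local_inverse_expansive local_inverse_pos in \<open>fastforce simp: dist_norm\<close>)+

lemma local_inverse_continuous: "continuous_on (ball (f a) \<rho>) g"
  using lipschitz_on_continuous_on[OF local_inverse_lipschitz] .

end

locale isom_deriv_map =
  fixes f :: "'a::banach \<Rightarrow> 'b::banach"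
    and f' :: "'a \<Rightarrow> ('a \<Rightarrow>\<^sub>L 'b)"
  assumes deriv: "\<And>x. (f has_derivative blinfun_apply (f' x)) (at x)"
    and cont_deriv: "continuous_on UNIV f'"
    and isom: "\<And>x. is_isom (f' x)"
    and bdd_inv: "\<And>r. 0 < r \<Longrightarrow> bdd_above ((\<lambda>x. norm (blinfun_inv (f' x))) ` cball 0 r)"
begin

abbreviation inv_deriv :: "'a \<Rightarrow> ('b \<Rightarrow>\<^sub>L 'a)" where
  "inv_deriv x \<equiv> blinfun_inv (f' x)"

lemma inv_deriv_left [simp]: "inv_deriv x (f' x h) = h"
  using arg_cong[OF is_isom_inv(1)[OF isom], of "\<lambda>L. blinfun_apply L h"] by simp

lemma inv_deriv_right [simp]: "f' x (inv_deriv x h) = h"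
  using arg_cong[OF is_isom_inv(2)[OF isom], of "\<lambda>L. blinfun_apply L h"] by simp

lemma continuous_on_f: "continuous_on S f"
  using deriv has_derivative_continuous continuous_at_imp_continuous_on by blast

lemma inv_deriv_bounded: "\<exists>M\<ge>0. \<forall>z. norm z \<le> r \<longrightarrow> norm (inv_deriv z) \<le> M"
proof -
  have "\<exists>M. \<forall>z\<in>cball 0 (max r 1). norm (inv_deriv z) \<le> M"
    using bdd_inv[of "max r 1"] by (simp add: bdd_above_def)
  then obtain M where M: "\<forall>z\<in>cball 0 (max r 1). norm (inv_deriv z) \<le> M" ..
  then have "0 \<le> M" using norm_ge_zero order_trans by (metis centre_in_cball max.cobounded2 zero_le_one)
  with M show ?thesis by (intro exI[of _ M]) auto
qed

lemma inv_deriv_diff: "inv_deriv b - inv_deriv a = inv_deriv b o\<^sub>L (f' a - f' b) o\<^sub>L inv_deriv a"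
  by (rule blinfun_eqI) (simp add: blinfun.diff_left blinfun.diff_right)

lemma continuous_on_inv_deriv: "continuous_on UNIV inv_deriv"
proof (intro continuous_at_imp_continuous_on ballI)
  fix a :: 'a
  obtain M where M: "\<And>z. norm z \<le> norm a + 1 \<Longrightarrow> norm (inv_deriv z) \<le> M"
    using inv_deriv_bounded[of "norm a + 1"] by blast
  have "\<forall>\<^sub>F b in at a. norm (inv_deriv b - inv_deriv a) \<le> M * norm (f' b - f' a) * norm (inv_deriv a)"
    using eventually_at_ball[OF zero_less_one]
  proof eventually_elim
    case (elim b)
    then have "norm b \<le> norm a + 1"
      using norm_triangle_ineq2[of b a] by (simp add: dist_norm norm_minus_commute)
    have "norm (inv_deriv b - inv_deriv a) \<le> norm (inv_deriv b) * norm (f' a - f' b) * norm (inv_deriv a)"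
      unfolding inv_deriv_diff
      by (rule order_trans[OF norm_blinfun_compose mult_right_mono[OF norm_blinfun_compose]]) simp
    also have "\<dots> \<le> M * norm (f' b - f' a) * norm (inv_deriv a)"
      using M[OF \<open>norm b \<le> _\<close>] by (simp add: mult_right_mono norm_minus_commute)
    finally show ?case .
  qed
  moreover have "((\<lambda>b. norm (f' b - f' a)) \<longlongrightarrow> 0) (at a)"
    using cont_deriv unfolding continuous_on_def by (intro tendsto_norm_zero LIM_zero) simp
  then have "((\<lambda>b. M * norm (f' b - f' a) * norm (inv_deriv a)) \<longlongrightarrow> 0) (at a)"
    by (rule tendsto_mult_left_zero[OF tendsto_mult_right_zero])
  ultimately have "((\<lambda>b. inv_deriv b - inv_deriv a) \<longlongrightarrow> 0) (at a)"
    by (rule Lim_null_comparison)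
  then show "isCont inv_deriv a" unfolding isCont_def by (rule LIM_zero_cancel)
qed

lemma newton_map_contraction:
  assumes "e > 0"
  obtains \<delta> where "0 < \<delta>" "\<delta> \<le> e"
    "\<forall>x1\<in>cball a \<delta>. \<forall>x2\<in>cball a \<delta>. norm (x1 - x2 - inv_deriv a (f x1 - f x2)) \<le> norm (x1 - x2) / 2"
proof -
  define c where "c = 1 / (2 * (norm (inv_deriv a) + 1))"
  have "norm (inv_deriv a) + 1 > 0" by (simp add: add_nonneg_pos)
  then have "c > 0" and c: "(norm (inv_deriv a) + 1) * c = 1 / 2" by (simp_all add: c_def)
  then obtain d where "d > 0" and d: "\<And>x. dist x a < d \<Longrightarrow> dist (f' x) (f' a) < c"
    using cont_deriv unfolding continuous_on_iff by (metis UNIV_I)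
  define \<delta> where "\<delta> = min e (d / 2)"
  have \<delta>: "0 < \<delta>" "\<delta> \<le> e" "\<delta> < d" using \<open>e > 0\<close> \<open>d > 0\<close> by (auto simp: \<delta>_def)
  define h where "h x = x - inv_deriv a (f x)" for x
  have h_deriv: "(h has_derivative (\<lambda>u. u - inv_deriv a (f' x u))) (at x within cball a \<delta>)" for x
    unfolding h_def
    by (auto intro!: derivative_eq_intros deriv[THEN has_derivative_at_withinI]
        simp: blinfun.bounded_linear_right)
  have h_deriv_bound: "onorm (\<lambda>u. u - inv_deriv a (f' x u)) \<le> 1 / 2" if "x \<in> cball a \<delta>" for x
  proof (rule onorm_bound)
    fix u
    have "norm (f' a - f' x) \<le> c"
      using d[of x] that \<delta> by (simp add: dist_norm norm_minus_commute)
    have "u - inv_deriv a (f' x u) = inv_deriv a ((f' a - f' x) u)"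
      by (simp add: blinfun.diff_left blinfun.diff_right)
    also have "norm \<dots> \<le> norm (inv_deriv a) * (norm (f' a - f' x) * norm u)"
      by (meson mult_left_mono norm_blinfun norm_ge_zero order_trans)
    also have "\<dots> \<le> (norm (inv_deriv a) + 1) * (c * norm u)"
      using \<open>norm (f' a - f' x) \<le> c\<close> by (intro mult_mono mult_right_mono) auto
    also have "\<dots> = 1 / 2 * norm u"
      by (simp only: c mult.assoc[symmetric])
    finally show "norm (u - inv_deriv a (f' x u)) \<le> 1 / 2 * norm u" .
  qed simp
  have "norm (h x1 - h x2) \<le> 1 / 2 * norm (x1 - x2)"
    if "x1 \<in> cball a \<delta>" "x2 \<in> cball a \<delta>" for x1 x2
    using differentiable_bound[OF convex_cball h_deriv h_deriv_bound that] .
  moreover have "h x1 - h x2 = x1 - x2 - inv_deriv a (f x1 - f x2)" for x1 x2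
    by (simp add: h_def blinfun.diff_right)
  ultimately show thesis using \<delta> by (intro that[of \<delta>]) (auto simp del: mem_cball)
qed

lemma newton_map_surjective:
  assumes "0 < \<delta>"
    and contraction: "\<forall>x1\<in>cball a \<delta>. \<forall>x2\<in>cball a \<delta>.
       norm (x1 - x2 - inv_deriv a (f x1 - f x2)) \<le> norm (x1 - x2) / 2"
    and y: "dist y (f a) < \<delta> / (4 * (norm (inv_deriv a) + 1))"
  shows "\<exists>z\<in>ball a \<delta>. f z = y"
proof -
  define T where "T z = z - inv_deriv a (f z - y)" for z
  have T_diff: "T z1 - T z2 = z1 - z2 - inv_deriv a (f z1 - f z2)" for z1 z2
    by (simp add: T_def blinfun.diff_right)
  have "norm (inv_deriv a (f a - y)) \<le> norm (inv_deriv a) * dist y (f a)"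
    using norm_blinfun[of "inv_deriv a" "f a - y"] by (simp add: dist_norm norm_minus_commute)
  also have "\<dots> \<le> (norm (inv_deriv a) + 1) * dist y (f a)"
    by (simp add: mult_right_mono)
  also have "\<dots> \<le> \<delta> / 4"
  proof -
    have "0 < 4 * (norm (inv_deriv a) + 1)" by (simp add: add_nonneg_pos)
    then have "dist y (f a) * (4 * (norm (inv_deriv a) + 1)) < \<delta>"
      using y pos_less_divide_eq by blast
    then show ?thesis by (simp add: algebra_simps)
  qed
  finally have T_a: "norm (T a - a) \<le> \<delta> / 4" by (simp add: T_def)
  have "\<exists>!z\<in>cball a (\<delta> / 2). T z = z"
  proof (rule Banach_fix[where c = "1 / 2"])
    show "T ` cball a (\<delta> / 2) \<subseteq> cball a (\<delta> / 2)"
    proof clarify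
      fix z assume z: "z \<in> cball a (\<delta> / 2)"
      have "norm (T z - T a) \<le> norm (z - a) / 2"
        unfolding T_diff using z \<open>0 < \<delta>\<close> contraction by auto
      also have "\<dots> \<le> \<delta> / 4" using z by (simp add: dist_norm norm_minus_commute)
      finally show "T z \<in> cball a (\<delta> / 2)"
        using T_a norm_triangle_ineq[of "T z - T a" "T a - a"] by (simp add: dist_norm norm_minus_commute)
    qed
    show "dist (T x1) (T x2) \<le> 1 / 2 * dist x1 x2"
      if "x1 \<in> cball a (\<delta> / 2)" "x2 \<in> cball a (\<delta> / 2)" for x1 x2
      using contraction that \<open>0 < \<delta>\<close> by (simp add: dist_norm T_diff)
  qed (use \<open>0 < \<delta>\<close> in \<open>auto simp: complete_eq_closed\<close>)
  then obtain z where z: "z \<in> cball a (\<delta> / 2)" "T z = z" by blast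
  then have "f' a (inv_deriv a (f z - y)) = 0" by (simp add: T_def)
  then have "f z = y" by simp
  moreover have "z \<in> ball a \<delta>" using z \<open>0 < \<delta>\<close> by simp
  ultimately show ?thesis by blast
qed

lemma local_inverse_exists: "e > 0 \<Longrightarrow> \<exists>\<delta> \<rho> K g. \<delta> \<le> e \<and> local_inverse f a \<delta> \<rho> K g"
proof -
  assume "e > 0"
  then obtain \<delta> where "0 < \<delta>" "\<delta> \<le> e" and contraction: "\<forall>x1\<in>cball a \<delta>. \<forall>x2\<in>cball a \<delta>.
       norm (x1 - x2 - inv_deriv a (f x1 - f x2)) \<le> norm (x1 - x2) / 2"
    by (rule newton_map_contraction[of e a])
  define K0 where "K0 = norm (inv_deriv a) + 1"
  have "K0 > 0" by (simp add: K0_def add_nonneg_pos)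
  define \<rho> where "\<rho> = \<delta> / (4 * K0)"
  define g where "g y = (SOME z. z \<in> ball a \<delta> \<and> f z = y)" for y
  have "norm (x1 - x2) \<le> 2 * K0 * norm (f x1 - f x2)" if "x1 \<in> ball a \<delta>" "x2 \<in> ball a \<delta>" for x1 x2
  proof -
    have "norm (x1 - x2) \<le> norm (x1 - x2 - inv_deriv a (f x1 - f x2)) + norm (inv_deriv a (f x1 - f x2))"
      using norm_triangle_ineq[of "x1 - x2 - inv_deriv a (f x1 - f x2)" "inv_deriv a (f x1 - f x2)"] by simp
    also have "\<dots> \<le> norm (x1 - x2) / 2 + norm (inv_deriv a) * norm (f x1 - f x2)"
      using contraction that norm_blinfun[of "inv_deriv a" "f x1 - f x2"] by (intro add_mono) auto
    also have "\<dots> \<le> norm (x1 - x2) / 2 + K0 * norm (f x1 - f x2)"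
      by (simp add: K0_def mult_right_mono)
    finally show ?thesis by simp
  qed
  moreover have "g y \<in> ball a \<delta> \<and> f (g y) = y" if "y \<in> ball (f a) \<rho>" for y
    unfolding g_def
    by (rule someI_ex) (use newton_map_surjective[OF \<open>0 < \<delta>\<close> contraction, of y] that in
        \<open>auto simp: \<rho>_def K0_def dist_commute\<close>)
  ultimately have "local_inverse f a \<delta> \<rho> (2 * K0) g"
    unfolding local_inverse_def \<rho>_def using \<open>0 < \<delta>\<close> \<open>K0 > 0\<close> by auto
  then show ?thesis using \<open>\<delta> \<le> e\<close> by blast
qed

lemma locally_injective: "\<exists>e>0. inj_on f (ball x e)"
  using local_inverse_exists[OF zero_less_one, of x] local_inverse_inj_on local_inverse_pos by metis

lemma open_image: "open S \<Longrightarrow> open (f ` S)"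
proof (subst open_contains_ball, intro ballI)
  fix y assume "open S" "y \<in> f ` S"
  then obtain a e where "a \<in> S" "y = f a" "e > 0" "ball a e \<subseteq> S"
    using open_contains_ball by blast
  then obtain \<delta> \<rho> K g where "\<delta> \<le> e" and loc: "local_inverse f a \<delta> \<rho> K g"
    using local_inverse_exists by blast
  have "ball (f a) \<rho> \<subseteq> f ` ball a \<delta>"
    using local_inverse_right[OF loc] by (metis image_eqI subsetI)
  also have "\<dots> \<subseteq> f ` S"
    using \<open>\<delta> \<le> e\<close> \<open>ball a e \<subseteq> S\<close> by (meson image_mono order_trans subset_ball)
  finally have "ball (f a) \<rho> \<subseteq> f ` S" .
  then show "\<exists>e>0. ball y e \<subseteq> f ` S"
    using local_inverse_pos[OF loc] \<open>y = f a\<close> by blast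
qed

lemma local_inverse_has_derivative:
  assumes loc: "local_inverse f a \<delta> \<rho> K g"
  shows "(g has_derivative inv_deriv a) (at (f a))"
proof (rule has_derivative_inverse_basic[where f' = "f' a" and T = "ball (f a) \<rho>"])
  show "(f has_derivative f' a) (at (g (f a)))" using deriv local_inverse_centre[OF loc] by simp
  show "continuous (at (f a)) g"
    using local_inverse_continuous[OF loc] local_inverse_pos[OF loc]
    by (simp add: continuous_on_eq_continuous_at)
qed (use local_inverse_right[OF loc] local_inverse_pos[OF loc] in
    \<open>auto simp: fun_eq_iff blinfun.bounded_linear_right\<close>)

text \<open>Along a solution of the Newton equation x' = newton_field y0 x the value f x - y0 decays like
  exp (- t); a Newton lift is a continuous path with exactly this image.\<close>

definition newton_image :: "'b \<Rightarrow> 'a \<Rightarrow> real \<Rightarrow> 'b" where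
  "newton_image y0 x t = y0 + exp (- t) *\<^sub>R (f x - y0)"

definition newton_lift :: "'b \<Rightarrow> 'a \<Rightarrow> real \<Rightarrow> (real \<Rightarrow> 'a) \<Rightarrow> bool" where
  "newton_lift y0 x T \<gamma> \<longleftrightarrow>
     continuous_on {0..T} \<gamma> \<and> \<gamma> 0 = x \<and> (\<forall>t\<in>{0..T}. f (\<gamma> t) = newton_image y0 x t)"

definition newton_field :: "'b \<Rightarrow> 'a \<Rightarrow> 'a" where
  "newton_field y0 z = - inv_deriv z (f z - y0)"

lemma newton_image_0 [simp]: "newton_image y0 x 0 = f x"
  by (simp add: newton_image_def)

lemma newton_image_minus_target: "newton_image y0 x t - y0 = exp (- t) *\<^sub>R (f x - y0)"
  by (simp add: newton_image_def)

lemma newton_image_diff: "newton_image y0 x' t - newton_image y0 x t = exp (- t) *\<^sub>R (f x' - f x)"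
  by (simp add: newton_image_def algebra_simps)

lemma newton_image_shift:
  "f z = newton_image y0 x t \<Longrightarrow> newton_image y0 z s = newton_image y0 x (t + s)"
  by (simp add: newton_image_def exp_add[symmetric] mult.commute)

lemma newton_image_dist:
  "0 \<le> t \<Longrightarrow> dist (newton_image y0 x' t) (newton_image y0 x t) \<le> dist (f x') (f x)"
  by (simp add: dist_norm newton_image_diff mult_left_le_one_le)

lemma continuous_on_newton_image: "continuous_on S (newton_image y0 x)"
  unfolding newton_image_def by (intro continuous_intros)

lemma newton_image_has_derivative:
  "(newton_image y0 x has_derivative (\<lambda>h. h *\<^sub>R (- exp (- t) *\<^sub>R (f x - y0)))) (at t within S)"
  unfolding newton_image_def by (auto intro!: derivative_eq_intros simp: algebra_simps)

lemma newton_lift_restrict: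
  assumes "newton_lift y0 x T \<gamma>" "T' \<le> T"
  shows "newton_lift y0 x T' \<gamma>"
proof -
  have "{0..T'} \<subseteq> {0..T}" using \<open>T' \<le> T\<close> by auto
  then show ?thesis using assms(1) continuous_on_subset unfolding newton_lift_def by blast
qed

lemma newton_lift_unique:
  assumes "newton_lift y0 x T \<gamma>1" "newton_lift y0 x T \<gamma>2" "t \<in> {0..T}"
  shows "\<gamma>1 t = \<gamma>2 t"
proof (rule continuous_lifts_eq[OF locally_injective connected_Icc])
  show "continuous_on {0..T} \<gamma>1" "continuous_on {0..T} \<gamma>2" "\<gamma>1 0 = \<gamma>2 0"
    using assms unfolding newton_lift_def by auto
  show "f (\<gamma>1 s) = f (\<gamma>2 s)" if "s \<in> {0..T}" for s
    using assms that unfolding newton_lift_def by auto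
qed (use assms in auto)

lemma newton_lift_has_derivative:
  assumes lift: "newton_lift y0 x T \<gamma>" and t: "t \<in> {0..T}"
  shows "(\<gamma> has_derivative (\<lambda>h. h *\<^sub>R newton_field y0 (\<gamma> t))) (at t within {0..T})"
proof -
  obtain \<delta> \<rho> K g where loc: "local_inverse f (\<gamma> t) \<delta> \<rho> K g"
    using local_inverse_exists[OF zero_less_one] by blast
  have f_\<gamma>: "f (\<gamma> s) = newton_image y0 x s" if "s \<in> {0..T}" for s
    using lift that unfolding newton_lift_def by blast
  have "inv_deriv (\<gamma> t) (h *\<^sub>R (- exp (- t) *\<^sub>R (f x - y0))) = h *\<^sub>R newton_field y0 (\<gamma> t)" for h
    using newton_image_minus_target[of y0 x t]
    by (simp add: newton_field_def f_\<gamma>[OF t] blinfun.scaleR_right blinfun.minus_right)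
  then have deriv_g: "((\<lambda>s. g (newton_image y0 x s)) has_derivative (\<lambda>h. h *\<^sub>R newton_field y0 (\<gamma> t)))
      (at t within {0..T})"
    using has_derivative_compose[OF newton_image_has_derivative
        local_inverse_has_derivative[OF loc, unfolded f_\<gamma>[OF t]]] by simp
  have "(\<gamma> \<longlongrightarrow> \<gamma> t) (at t within {0..T})"
    using lift t unfolding newton_lift_def continuous_on_def by blast
  then have "\<forall>\<^sub>F s in at t within {0..T}. \<gamma> s \<in> ball (\<gamma> t) \<delta>"
    using tendstoD local_inverse_pos[OF loc] by (fastforce simp: dist_commute)
  moreover have "(newton_image y0 x \<longlongrightarrow> f (\<gamma> t)) (at t within {0..T})"
    unfolding f_\<gamma>[OF t] newton_image_def by (intro tendsto_intros)
  then have "\<forall>\<^sub>F s in at t within {0..T}. newton_image y0 x s \<in> ball (f (\<gamma> t)) \<rho>"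
    using tendstoD local_inverse_pos[OF loc] by (fastforce simp: dist_commute)
  moreover have "\<forall>\<^sub>F s in at t within {0..T}. s \<in> {0..T}"
    by (simp add: eventually_at_filter)
  ultimately have "\<forall>\<^sub>F s in at t within {0..T}. g (newton_image y0 x s) = \<gamma> s"
    by eventually_elim (metis f_\<gamma> local_inverse_left[OF loc])
  moreover have "g (newton_image y0 x t) = \<gamma> t"
    using local_inverse_centre[OF loc] f_\<gamma>[OF t] by simp
  ultimately show ?thesis
    using has_derivative_transform_eventually[OF deriv_g] t by blast
qed

lemma newton_lift_extend:
  assumes lift: "newton_lift y0 x T \<gamma>" and "0 \<le> T"
  shows "\<exists>T'>T. \<exists>\<gamma>'. newton_lift y0 x T' \<gamma>'"
proof -
  obtain \<delta> \<rho> K g where loc: "local_inverse f (\<gamma> T) \<delta> \<rho> K g"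
    using local_inverse_exists[OF zero_less_one] by blast
  have f_\<gamma>: "f (\<gamma> s) = newton_image y0 x s" if "s \<in> {0..T}" for s
    using lift that unfolding newton_lift_def by blast
  obtain d where "d > 0" and d: "\<And>s. dist s T < d \<Longrightarrow> newton_image y0 x s \<in> ball (f (\<gamma> T)) \<rho>"
    using continuous_on_newton_image[of UNIV y0 x] local_inverse_pos[OF loc] f_\<gamma>[of T] \<open>0 \<le> T\<close>
    unfolding continuous_on_iff by (metis UNIV_I atLeastAtMost_iff dist_commute mem_ball order_refl)
  define \<gamma>' where "\<gamma>' s = (if s \<le> T then \<gamma> s else g (newton_image y0 x s))" for s
  have "newton_lift y0 x (T + d / 2) \<gamma>'"
    unfolding newton_lift_def
  proof (intro conjI ballI)
    have "continuous_on {s \<in> {0..T + d / 2}. s \<le> T} \<gamma>"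
      using lift unfolding newton_lift_def by (rule conjunct1[THEN continuous_on_subset]) auto
    moreover have "continuous_on {s \<in> {0..T + d / 2}. T \<le> s} (\<lambda>s. g (newton_image y0 x s))"
      by (rule continuous_on_compose2[OF local_inverse_continuous[OF loc] continuous_on_newton_image])
        (use d \<open>d > 0\<close> in \<open>auto simp: dist_real_def\<close>)
    moreover have "\<gamma> T = g (newton_image y0 x T)"
      using local_inverse_centre[OF loc] f_\<gamma>[of T] \<open>0 \<le> T\<close> by simp
    ultimately show "continuous_on {0..T + d / 2} \<gamma>'"
      unfolding \<gamma>'_def by (intro continuous_on_cases_le continuous_on_id) auto
    show "\<gamma>' 0 = x" using lift \<open>0 \<le> T\<close> by (simp add: \<gamma>'_def newton_lift_def)
    show "f (\<gamma>' s) = newton_image y0 x s" if "s \<in> {0..T + d / 2}" for s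
      using f_\<gamma>[of s] local_inverse_right[OF loc] d[of s] that \<open>d > 0\<close>
      by (auto simp: \<gamma>'_def dist_real_def)
  qed
  then show ?thesis using \<open>d > 0\<close> by (intro exI[of _ "T + d / 2"]) auto
qed

definition newton_flow :: "'b \<Rightarrow> 'a \<Rightarrow> real \<Rightarrow> 'a" where
  "newton_flow y0 x t = (SOME \<gamma>. newton_lift y0 x t \<gamma>) t"

lemma newton_flow_eq:
  assumes lift: "newton_lift y0 x T \<gamma>" and t: "t \<in> {0..T}"
  shows "newton_flow y0 x t = \<gamma> t"
proof -
  have "newton_lift y0 x t \<gamma>" using newton_lift_restrict[OF lift] t by simp
  then have "newton_lift y0 x t (SOME \<gamma>. newton_lift y0 x t \<gamma>)" by (rule someI[where P = "newton_lift y0 x t"])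
  then show ?thesis
    unfolding newton_flow_def using \<open>newton_lift y0 x t \<gamma>\<close> t by (intro newton_lift_unique) auto
qed

lemma newton_flow_0 [simp]: "newton_flow y0 x 0 = x"
  using newton_flow_eq[of y0 x 0 "\<lambda>_. x" 0] by (simp add: newton_lift_def)

lemma newton_lift_flow:
  assumes lift: "newton_lift y0 x T \<gamma>"
  shows "newton_lift y0 x T (newton_flow y0 x)"
  unfolding newton_lift_def
proof (intro conjI ballI)
  show "continuous_on {0..T} (newton_flow y0 x)"
    using lift newton_flow_eq[OF lift] unfolding newton_lift_def by (metis continuous_on_eq)
  show "f (newton_flow y0 x t) = newton_image y0 x t" if "t \<in> {0..T}" for t
    using lift newton_flow_eq[OF lift that] that unfolding newton_lift_def by simp
qed simp

lemma lift_in_local_inverse: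
  fixes \<gamma> :: "real \<Rightarrow> 'a"
  assumes loc: "local_inverse f a \<delta> \<rho> K g" and cont: "continuous_on {\<tau>..s} \<gamma>"
    and img: "\<And>\<sigma>. \<sigma> \<in> {\<tau>..s} \<Longrightarrow> f (\<gamma> \<sigma>) \<in> ball (f a) \<rho>"
    and start: "\<gamma> \<tau> \<in> ball a \<delta>" and "\<sigma> \<in> {\<tau>..s}"
  shows "\<gamma> \<sigma> = g (f (\<gamma> \<sigma>))"
proof (rule continuous_lifts_eq[OF locally_injective connected_Icc cont, of "\<lambda>\<sigma>. g (f (\<gamma> \<sigma>))" \<tau>])
  show "continuous_on {\<tau>..s} (\<lambda>\<sigma>. g (f (\<gamma> \<sigma>)))"
    using img by (intro continuous_on_compose2[OF local_inverse_continuous[OF loc]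
          continuous_on_compose2[OF continuous_on_f cont]]) auto
  show "f (\<gamma> t) = f (g (f (\<gamma> t)))" if "t \<in> {\<tau>..s}" for t
    using local_inverse_right[OF loc img[OF that]] by simp
  show "\<gamma> \<tau> = g (f (\<gamma> \<tau>))"
    using local_inverse_left[OF loc start img] \<open>\<sigma> \<in> {\<tau>..s}\<close> by simp
qed (use \<open>\<sigma> \<in> {\<tau>..s}\<close> in auto)

lemma inj_on_closure_fibre:
  assumes "open S" "inj_on f S" "w \<in> S" "z \<in> closure S" "f z = f w"
  shows "z = w"
proof -
  obtain e where "e > 0" "ball w e \<subseteq> S" using assms open_contains_ball by blast
  then obtain \<delta> \<rho> K g where "\<delta> \<le> e" and loc: "local_inverse f w \<delta> \<rho> K g"
    using local_inverse_exists by blast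
  obtain zs where zs: "\<And>n. zs n \<in> S" "zs \<longlonglongrightarrow> z"
    using \<open>z \<in> closure S\<close> unfolding closure_sequential by blast
  have "(\<lambda>n. f (zs n)) \<longlonglongrightarrow> f w"
    using continuous_on_f[of UNIV] zs(2) \<open>f z = f w\<close>
    by (metis UNIV_I continuous_on_def isCont_tendsto_compose continuous_on_eq_continuous_at open_UNIV)
  then have "\<forall>\<^sub>F n in sequentially. f (zs n) \<in> ball (f w) \<rho>"
    using tendstoD local_inverse_pos[OF loc] by (fastforce simp: dist_commute)
  then have "\<forall>\<^sub>F n in sequentially. g (f (zs n)) = zs n"
  proof eventually_elim
    case (elim n)
    then have "g (f (zs n)) \<in> ball w \<delta>" "f (g (f (zs n))) = f (zs n)"
      using local_inverse_right[OF loc] by auto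
    moreover have "ball w \<delta> \<subseteq> S" using \<open>\<delta> \<le> e\<close> \<open>ball w e \<subseteq> S\<close> by auto
    ultimately have "g (f (zs n)) \<in> S" "f (g (f (zs n))) = f (zs n)" by auto
    then show ?case using \<open>inj_on f S\<close> zs(1) by (auto dest: inj_onD)
  qed
  moreover have "(\<lambda>n. g (f (zs n))) \<longlonglongrightarrow> w"
  proof -
    have "isCont g (f w)"
      using local_inverse_continuous[OF loc] local_inverse_pos[OF loc]
      by (simp add: continuous_on_eq_continuous_at)
    from isCont_tendsto_compose[OF this \<open>(\<lambda>n. f (zs n)) \<longlonglongrightarrow> f w\<close>]
    show ?thesis using local_inverse_centre[OF loc] by simp
  qed
  ultimately have "zs \<longlonglongrightarrow> w" by (simp add: Lim_transform_eventually)
  then show ?thesis using zs(2) LIMSEQ_unique by blast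
qed

lemma inverse_C1:
  assumes "inj f"
  shows "\<exists>g. (\<forall>x. g (f x) = x) \<and> (\<forall>y\<in>range f. f (g y) = y) \<and> C1_on (range f) g"
proof -
  have deriv_inv: "(inv f has_derivative inv_deriv (inv f y)) (at y)" if "y \<in> range f" for y
  proof -
    obtain \<delta> \<rho> K g where loc: "local_inverse f (inv f y) \<delta> \<rho> K g"
      using local_inverse_exists[OF zero_less_one] by blast
    have "f (inv f y) = y" using that by (simp add: f_inv_into_f)
    show ?thesis
    proof (rule has_derivative_transform_within_open[OF _ open_ball])
      show "(g has_derivative inv_deriv (inv f y)) (at y)"
        using local_inverse_has_derivative[OF loc] \<open>f (inv f y) = y\<close> by simp
      show "y \<in> ball y \<rho>" using local_inverse_pos[OF loc] by simp
      show "g y' = inv f y'" if "y' \<in> ball y \<rho>" for y'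
      proof -
        have "f (g y') = y'" using local_inverse_right[OF loc] that \<open>f (inv f y) = y\<close> by simp
        then show ?thesis using inv_f_f[OF \<open>inj f\<close>, of "g y'"] by simp
      qed
    qed
  qed
  have "isCont (inv f) y" if "y \<in> range f" for y
    using has_derivative_continuous[OF deriv_inv[OF that]] .
  then have "continuous_on (range f) (inv f)" by (simp add: continuous_at_imp_continuous_on)
  then have "continuous_on (range f) (\<lambda>y. inv_deriv (inv f y))"
    by (rule continuous_on_compose2[OF continuous_on_inv_deriv _ subset_UNIV])
  then have "C1_on (range f) (inv f)"
    unfolding C1_on_def using deriv_inv by (intro exI[of _ "\<lambda>y. inv_deriv (inv f y)"]) simp
  moreover have "inv f (f x) = x" for x using \<open>inj f\<close> by simp
  moreover have "f (inv f y) = y" if "y \<in> range f" for y using that by (rule f_inv_into_f)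
  ultimately show ?thesis by blast
qed

end

locale newton_lyapunov = isom_deriv_map f f' for f :: "'a::banach \<Rightarrow> 'b::banach" and f' +
  fixes y0 :: 'b and k :: "'a \<Rightarrow> real" and C :: real
  assumes lipschitz_k: "locally_lipschitz k" and coercive_k: "coercive k"
    and right_derivs_k: "has_right_dir_derivs k"
    and descent: "\<And>x. right_dir_deriv k x (newton_field y0 x) \<le> C"
begin

lemma lyapunov_along_lift:
  assumes lift: "newton_lift y0 x T \<gamma>" and t: "t \<in> {0..T}"
  shows "k (\<gamma> t) \<le> k x + C * t"
proof -
  have "continuous_on {0..T} (\<lambda>s. k (\<gamma> s))"
    using coercive_k lift unfolding coercive_def newton_lift_def
    by (auto intro: continuous_on_compose2[of UNIV k])
  moreover have "\<exists>d>0. \<forall>h. 0 < h \<and> h < d \<longrightarrow> k (\<gamma> (s + h)) \<le> k (\<gamma> s) + (C + e) * h"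
    if s_bounds: "0 \<le> s" "s < T" and "e > 0" for s e
  proof -
    define w where "w = newton_field y0 (\<gamma> s)"
    obtain l where l: "((\<lambda>h. (k (\<gamma> s + h *\<^sub>R w) - k (\<gamma> s)) / h) \<longlongrightarrow> l) (at_right 0)"
      using right_derivs_k unfolding has_right_dir_derivs_def by blast
    have "l \<le> C"
      using descent[of "\<gamma> s"] tendsto_Lim[OF trivial_limit_at_right_real l]
      unfolding right_dir_deriv_def w_def by simp
    obtain U L where U: "open U" "\<gamma> s \<in> U" and lip: "L-lipschitz_on U k"
      using lipschitz_k unfolding locally_lipschitz_def by blast
    have der: "(\<gamma> has_derivative (\<lambda>h. h *\<^sub>R w)) (at s within {s..s + (T - s)})"
      using newton_lift_has_derivative[OF lift, of s] s_bounds unfolding w_def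
      by (auto intro: has_derivative_subset)
    obtain d where "d > 0"
      and d: "\<And>h. 0 < h \<Longrightarrow> h < d \<Longrightarrow> k (\<gamma> (s + h)) \<le> k (\<gamma> s) + (l + e) * h"
      using lipschitz_comp_right_dini[OF lip U der _ l \<open>e > 0\<close>] s_bounds by auto
    have "(l + e) * h \<le> (C + e) * h" if "0 < h" for h
      using \<open>l \<le> C\<close> that by (simp add: mult_right_mono)
    then show ?thesis using \<open>d > 0\<close> d by (meson add_left_mono order_trans)
  qed
  ultimately have "k (\<gamma> t) \<le> k (\<gamma> 0) + C * t"
    by (rule continuous_right_dini_bound[OF _ _ t]) blast
  then show ?thesis using lift unfolding newton_lift_def by simp
qed

lemma newton_lift_lipschitz:
  obtains L where "\<And>T \<gamma>. newton_lift y0 x T \<gamma> \<Longrightarrow> T \<le> Tm \<Longrightarrow> L-lipschitz_on {0..T} \<gamma>"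
proof -
  obtain R where R: "\<And>z. k z \<le> k x + \<bar>C\<bar> * Tm \<Longrightarrow> norm z < R"
    using coercive_sublevel_bounded[OF coercive_k] by blast
  obtain M where "0 \<le> M" and M: "\<And>z. norm z \<le> R \<Longrightarrow> norm (inv_deriv z) \<le> M"
    using inv_deriv_bounded[of R] by blast
  have "(M * norm (f x - y0))-lipschitz_on {0..T} \<gamma>"
    if lift: "newton_lift y0 x T \<gamma>" and "T \<le> Tm" for T \<gamma>
  proof (rule lipschitz_onI)
    have "onorm (\<lambda>h. h *\<^sub>R newton_field y0 (\<gamma> \<tau>)) \<le> M * norm (f x - y0)" if "\<tau> \<in> {0..T}" for \<tau>
    proof (rule onorm_bound)
      have "C * \<tau> \<le> \<bar>C\<bar> * Tm"
        using that \<open>T \<le> Tm\<close> by (meson abs_ge_self abs_ge_zero atLeastAtMost_iff mult_mono order_trans)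
      then have "norm (\<gamma> \<tau>) \<le> R"
        using lyapunov_along_lift[OF lift that] R[of "\<gamma> \<tau>"] by simp
      moreover have "norm (f (\<gamma> \<tau>) - y0) \<le> norm (f x - y0)"
        using lift that newton_image_minus_target[of y0 x \<tau>]
        by (simp add: newton_lift_def mult_left_le_one_le)
      ultimately have "norm (newton_field y0 (\<gamma> \<tau>)) \<le> M * norm (f x - y0)"
        unfolding newton_field_def norm_minus_cancel
        by (meson M mult_mono norm_blinfun norm_ge_zero order_trans \<open>0 \<le> M\<close>)
      then show "norm (h *\<^sub>R newton_field y0 (\<gamma> \<tau>)) \<le> M * norm (f x - y0) * norm h" for h
        by (simp add: mult_left_mono mult.commute)
    qed (use \<open>0 \<le> M\<close> in simp)
    then show "dist (\<gamma> s) (\<gamma> t) \<le> M * norm (f x - y0) * dist s t"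
      if "s \<in> {0..T}" "t \<in> {0..T}" for s t
      using differentiable_bound[OF convex_closed_interval(1) newton_lift_has_derivative[OF lift] _ that]
      by (simp add: dist_norm)
  qed (use \<open>0 \<le> M\<close> in simp)
  then show thesis by (rule that)
qed

lemma newton_lift_limit:
  assumes "0 < Tm" and lifts: "\<And>T. 0 \<le> T \<Longrightarrow> T < Tm \<Longrightarrow> \<exists>\<gamma>. newton_lift y0 x T \<gamma>"
  shows "\<exists>\<gamma>. newton_lift y0 x Tm \<gamma>"
proof -
  obtain L where L: "\<And>T \<gamma>. newton_lift y0 x T \<gamma> \<Longrightarrow> T \<le> Tm \<Longrightarrow> L-lipschitz_on {0..T} \<gamma>"
    using newton_lift_lipschitz[of x Tm] by blast
  have flow_lift: "newton_lift y0 x T (newton_flow y0 x)" if "0 \<le> T" "T < Tm" for T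
    using lifts[OF that] newton_lift_flow by blast
  have lip_flow: "L-lipschitz_on {0..<Tm} (newton_flow y0 x)"
  proof (rule lipschitz_onI)
    show "dist (newton_flow y0 x s) (newton_flow y0 x t) \<le> L * dist s t"
      if "s \<in> {0..<Tm}" "t \<in> {0..<Tm}" for s t
    proof -
      have "L-lipschitz_on {0..max s t} (newton_flow y0 x)"
        using L[OF flow_lift[of "max s t"]] that by auto
      then show ?thesis using that by (auto intro: lipschitz_onD)
    qed
    show "0 \<le> L" using L[OF flow_lift[of 0]] \<open>0 < Tm\<close> by (auto intro: lipschitz_on_nonneg)
  qed
  have "\<exists>\<gamma>. L-lipschitz_on {0..Tm} \<gamma> \<and> (\<forall>t\<in>{0..<Tm}. \<gamma> t = newton_flow y0 x t)"
    using lipschitz_extend_closure[OF lip_flow] \<open>0 < Tm\<close> by simp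
  then obtain \<gamma> where lip: "L-lipschitz_on {0..Tm} \<gamma>" and eq: "\<And>t. t \<in> {0..<Tm} \<Longrightarrow> \<gamma> t = newton_flow y0 x t"
    by blast
  have cont: "continuous_on {0..Tm} \<gamma>" using lip by (rule lipschitz_on_continuous_on)
  have "f (\<gamma> t) - newton_image y0 x t = 0" if "t \<in> {0..Tm}" for t
  proof (rule continuous_constant_on_closure[where S = "{0..<Tm}"])
    have "continuous_on {0..Tm} (\<lambda>t. f (\<gamma> t) - newton_image y0 x t)"
      by (intro continuous_on_diff continuous_on_compose2[OF continuous_on_f cont]
          continuous_on_newton_image) auto
    then show "continuous_on (closure {0..<Tm}) (\<lambda>t. f (\<gamma> t) - newton_image y0 x t)"
      using \<open>0 < Tm\<close> by simp
    show "f (\<gamma> t) - newton_image y0 x t = 0" if "t \<in> {0..<Tm}" for t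
      using eq[OF that] flow_lift[of t] that unfolding newton_lift_def by simp
    show "t \<in> closure {0..<Tm}" using that \<open>0 < Tm\<close> by simp
  qed
  moreover have "\<gamma> 0 = x" using eq[of 0] \<open>0 < Tm\<close> by simp
  ultimately have "newton_lift y0 x Tm \<gamma>"
    using cont unfolding newton_lift_def by simp
  then show ?thesis by blast
qed

lemma newton_lift_exists: "0 \<le> T \<Longrightarrow> \<exists>\<gamma>. newton_lift y0 x T \<gamma>"
proof (induction T rule: nonneg_real_induct)
  case (limit t)
  show ?case
  proof (cases "t = 0")
    case True
    then show ?thesis by (intro exI[of _ "\<lambda>_. x"]) (simp add: newton_lift_def)
  next
    case False
    then show ?thesis using limit by (simp add: newton_lift_limit)
  qed
next
  case (step t)
  then obtain T' \<gamma> where "T' > t" and lift: "newton_lift y0 x T' \<gamma>"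
    using newton_lift_extend by blast
  have "newton_lift y0 x s \<gamma>" if "s < T'" for s
    using newton_lift_restrict[OF lift] that by simp
  then show ?case using \<open>T' > t\<close> by (intro exI[of _ "T' - t"]) auto
qed

end

context isom_deriv_map
begin

lemma newton_lifts_exist:
  assumes "locally_lipschitz k" "coercive k" "has_right_dir_derivs k"
    and "bdd_above {right_dir_deriv k x v | x v. v = - blinfun_inv (f' x) (f x - f x0)}"
    and "0 \<le> T"
  shows "\<exists>\<gamma>. newton_lift (f x0) x T \<gamma>"
proof -
  obtain C where "\<And>x. right_dir_deriv k x (newton_field (f x0) x) \<le> C"
    using assms(4) unfolding bdd_above_def newton_field_def by blast
  then interpret newton_lyapunov f f' "f x0" k C using assms(1-3) by unfold_locales
  show ?thesis using newton_lift_exists[OF \<open>0 \<le> T\<close>] .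
qed

lemma range_star_shaped:
  assumes "locally_lipschitz k" "coercive k" "has_right_dir_derivs k"
    and "bdd_above {right_dir_deriv k x v | x v. v = - blinfun_inv (f' x) (f x - f x0)}"
    and "y \<in> range f" "s \<in> {0..1}"
  shows "f x0 + s *\<^sub>R (y - f x0) \<in> range f"
proof (cases "s = 0")
  case False
  then have "0 < s" using \<open>s \<in> {0..1}\<close> by simp
  obtain x where "y = f x" using \<open>y \<in> range f\<close> by blast
  define t where "t = - ln s"
  have "0 \<le> t" using \<open>s \<in> {0..1}\<close> \<open>0 < s\<close> by (simp add: t_def)
  then obtain \<gamma> where "newton_lift (f x0) x t \<gamma>" using newton_lifts_exist assms(1-4) by blast
  then have "f (\<gamma> t) = newton_image (f x0) x t"
    using \<open>0 \<le> t\<close> unfolding newton_lift_def by simp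
  also have "\<dots> = f x0 + s *\<^sub>R (y - f x0)"
    using \<open>0 < s\<close> \<open>y = f x\<close> by (simp add: newton_image_def t_def)
  finally show ?thesis by (metis rangeI)
next
  case True
  then show ?thesis by (metis rangeI add_0_right scale_zero_left)
qed

end

locale complete_newton_flow = isom_deriv_map f f' for f :: "'a::banach \<Rightarrow> 'b::banach" and f' +
  fixes x0 :: 'a
  assumes lifts_exist: "\<And>x T. 0 \<le> T \<Longrightarrow> \<exists>\<gamma>. newton_lift (f x0) x T \<gamma>"
begin

abbreviation flow :: "'a \<Rightarrow> real \<Rightarrow> 'a" where
  "flow \<equiv> newton_flow (f x0)"

lemma flow_lift: "0 \<le> T \<Longrightarrow> newton_lift (f x0) x T (flow x)"
  using lifts_exist newton_lift_flow by blast

lemma f_flow: "0 \<le> t \<Longrightarrow> f (flow x t) = newton_image (f x0) x t"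
  using flow_lift[of t x] unfolding newton_lift_def by auto

lemma continuous_on_flow: "continuous_on {0..T} (flow x)"
  using flow_lift[of T x] unfolding newton_lift_def by (cases "0 \<le> T") auto

lemma flow_semigroup:
  assumes "0 \<le> t" "0 \<le> \<tau>"
  shows "flow (flow x t) \<tau> = flow x (t + \<tau>)"
proof -
  have "newton_lift (f x0) (flow x t) \<tau> (\<lambda>\<sigma>. flow x (t + \<sigma>))"
    unfolding newton_lift_def
  proof (intro conjI ballI)
    show "continuous_on {0..\<tau>} (\<lambda>\<sigma>. flow x (t + \<sigma>))"
      by (rule continuous_on_compose2[OF continuous_on_flow, of _ _ "t + \<tau>"])
        (use assms in \<open>auto intro!: continuous_intros\<close>)
    show "f (flow x (t + \<sigma>)) = newton_image (f x0) (flow x t) \<sigma>" if "\<sigma> \<in> {0..\<tau>}" for \<sigma>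
      using f_flow[of "t + \<sigma>" x] newton_image_shift[OF f_flow[OF \<open>0 \<le> t\<close>]] that assms by simp
  qed simp
  then show ?thesis using newton_flow_eq[of "f x0" "flow x t" \<tau>] assms by simp
qed

lemma flow_eq_local_inverse:
  assumes loc: "local_inverse f a \<delta> \<rho> K g" and "0 \<le> \<tau>" "\<tau> \<le> s"
    and img: "\<And>\<sigma>. \<sigma> \<in> {\<tau>..s} \<Longrightarrow> newton_image (f x0) x \<sigma> \<in> ball (f a) \<rho>"
    and start: "flow x \<tau> \<in> ball a \<delta>"
  shows "flow x s = g (newton_image (f x0) x s)"
proof -
  have cont: "continuous_on {\<tau>..s} (flow x)"
    using continuous_on_flow[of s x] by (rule continuous_on_subset) (use assms in auto)
  have img': "f (flow x \<sigma>) \<in> ball (f a) \<rho>" if "\<sigma> \<in> {\<tau>..s}" for \<sigma>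
    using img[OF that] f_flow[of \<sigma> x] that \<open>0 \<le> \<tau>\<close> by simp
  have "flow x s = g (f (flow x s))"
    using lift_in_local_inverse[OF loc cont img' start] \<open>\<tau> \<le> s\<close> by simp
  then show ?thesis using f_flow[of s x] assms by simp
qed

lemma flow_continuity_near_local_inverse:
  assumes loc: "local_inverse f a \<delta> \<rho> K g" and \<tau>: "0 \<le> \<tau>" "\<tau> \<le> s"
    and near: "\<And>\<sigma>. \<sigma> \<in> {\<tau>..s} \<Longrightarrow> dist (flow x \<sigma>) a < \<delta> / 2 \<and> dist (f (flow x \<sigma>)) (f a) < \<rho> / 2"
    and cont_\<tau>: "isCont (\<lambda>x. flow x \<tau>) x"
  shows "isCont (\<lambda>x. flow x s) x"
proof -
  note pos = local_inverse_pos[OF loc]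
  have "isCont f x" using continuous_on_f[of UNIV] by (simp add: continuous_on_eq_continuous_at)
  then have "(f \<longlongrightarrow> f x) (nhds x)" "((\<lambda>x'. flow x' \<tau>) \<longlongrightarrow> flow x \<tau>) (nhds x)"
    using cont_\<tau> tendsto_at_iff_tendsto_nhds[of "\<lambda>x'. flow x' \<tau>" x]
    by (simp_all add: isCont_def tendsto_at_iff_tendsto_nhds)
  then have "\<forall>\<^sub>F x' in nhds x. dist (flow x' \<tau>) (flow x \<tau>) < \<delta> / 2 \<and> dist (f x') (f x) < \<rho> / 2"
    using pos by (intro eventually_conj tendstoD) auto
  then have ev: "\<forall>\<^sub>F x' in nhds x. flow x' s = g (newton_image (f x0) x' s)"
  proof eventually_elim
    case (elim x')
    have "newton_image (f x0) x' \<sigma> \<in> ball (f a) \<rho>" if "\<sigma> \<in> {\<tau>..s}" for \<sigma>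
    proof -
      have "dist (newton_image (f x0) x \<sigma>) (newton_image (f x0) x' \<sigma>) < \<rho> / 2"
        using newton_image_dist[of \<sigma> "f x0" x' x] elim that \<tau> by (simp add: dist_commute)
      moreover have "dist (newton_image (f x0) x \<sigma>) (f a) < \<rho> / 2"
        using near[OF that] f_flow[of \<sigma> x] that \<tau> by simp
      ultimately show ?thesis by (simp add: dist_triangle_half_r)
    qed
    moreover have "flow x' \<tau> \<in> ball a \<delta>"
    proof -
      have "dist (flow x \<tau>) a < \<delta> / 2" using near[of \<tau>] \<tau> by simp
      moreover have "dist (flow x \<tau>) (flow x' \<tau>) < \<delta> / 2" using elim by (simp add: dist_commute)
      ultimately show ?thesis by (simp add: dist_triangle_half_r)
    qed
    ultimately show ?case by (rule flow_eq_local_inverse[OF loc \<tau>])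
  qed
  have "isCont (\<lambda>x'. newton_image (f x0) x' s) x"
    unfolding newton_image_def using \<open>isCont f x\<close> by (intro continuous_intros)
  moreover have "newton_image (f x0) x s \<in> ball (f a) \<rho>"
    using near[of s] f_flow[of s x] \<tau> pos(2) by (simp add: dist_commute)
  then have "isCont g (newton_image (f x0) x s)"
    using local_inverse_continuous[OF loc] by (simp add: continuous_on_eq_continuous_at)
  ultimately have "isCont (\<lambda>x'. g (newton_image (f x0) x' s)) x"
    using continuous_at_compose by (auto simp: o_def)
  then show ?thesis using isCont_cong[OF ev] by simp
qed

lemma flow_continuity_propagates:
  assumes "0 \<le> ts"
  shows "\<exists>e>0. \<forall>\<tau> s. 0 \<le> \<tau> \<longrightarrow> ts - e \<le> \<tau> \<longrightarrow> \<tau> \<le> s \<longrightarrow> s \<le> ts + e \<longrightarrow>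
           isCont (\<lambda>x. flow x \<tau>) x \<longrightarrow> isCont (\<lambda>x. flow x s) x"
proof -
  define a where "a = flow x ts"
  obtain \<delta> \<rho> K g where loc: "local_inverse f a \<delta> \<rho> K g"
    using local_inverse_exists[OF zero_less_one] by blast
  note pos = local_inverse_pos[OF loc]
  have "ts \<in> {0..ts + 1}" using \<open>0 \<le> ts\<close> by simp
  from continuous_on_flow[of "ts + 1" x, unfolded continuous_on_iff, rule_format, OF this half_gt_zero[OF pos(1)]]
  obtain e1 where "e1 > 0" and e1: "\<And>\<sigma>. \<sigma> \<in> {0..ts + 1} \<Longrightarrow> dist \<sigma> ts < e1 \<Longrightarrow> dist (flow x \<sigma>) a < \<delta> / 2"
    unfolding a_def by blast
  from continuous_on_newton_image[of UNIV "f x0" x, unfolded continuous_on_iff, rule_format, OF UNIV_I half_gt_zero[OF pos(2)]]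
  obtain e2 where "e2 > 0" and e2: "\<And>\<sigma>. dist \<sigma> ts < e2 \<Longrightarrow> dist (newton_image (f x0) x \<sigma>) (f a) < \<rho> / 2"
    using f_flow[OF \<open>0 \<le> ts\<close>, of x] unfolding a_def by auto
  define e where "e = Min {e1, e2, 1} / 2"
  have "e > 0" using \<open>e1 > 0\<close> \<open>e2 > 0\<close> by (simp add: e_def)
  moreover have "isCont (\<lambda>x. flow x s) x"
    if \<tau>: "0 \<le> \<tau>" "ts - e \<le> \<tau>" "\<tau> \<le> s" "s \<le> ts + e" and "isCont (\<lambda>x. flow x \<tau>) x" for \<tau> s
  proof (rule flow_continuity_near_local_inverse[OF loc \<tau>(1,3) _ that(5)])
    fix \<sigma> assume "\<sigma> \<in> {\<tau>..s}"
    then have "\<sigma> \<in> {0..ts + 1}" "dist \<sigma> ts < e1" "dist \<sigma> ts < e2"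
      using \<tau> \<open>e1 > 0\<close> \<open>e2 > 0\<close> by (auto simp: e_def dist_real_def)
    then show "dist (flow x \<sigma>) a < \<delta> / 2 \<and> dist (f (flow x \<sigma>)) (f a) < \<rho> / 2"
      using e1 e2 f_flow[of \<sigma> x] by simp
  qed
  ultimately show ?thesis by blast
qed

lemma continuous_flow: "0 \<le> t \<Longrightarrow> isCont (\<lambda>x. flow x t) x"
proof (induction t rule: nonneg_real_induct)
  case (limit t)
  obtain e where "e > 0" and propagate: "\<And>\<tau> s. 0 \<le> \<tau> \<Longrightarrow> t - e \<le> \<tau> \<Longrightarrow> \<tau> \<le> s \<Longrightarrow> s \<le> t + e \<Longrightarrow>
      isCont (\<lambda>x. flow x \<tau>) x \<Longrightarrow> isCont (\<lambda>x. flow x s) x"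
    using flow_continuity_propagates[OF limit(1), of x] by blast
  show ?case
  proof (cases "t = 0")
    case False
    define \<tau> where "\<tau> = max 0 (t - e / 2)"
    have "0 \<le> \<tau>" "t - e \<le> \<tau>" "\<tau> < t" using False limit(1) \<open>e > 0\<close> by (auto simp: \<tau>_def)
    then show ?thesis using propagate limit(2) \<open>e > 0\<close> by simp
  qed simp
next
  case (step t)
  obtain e where "e > 0" and propagate: "\<And>\<tau> s. 0 \<le> \<tau> \<Longrightarrow> t - e \<le> \<tau> \<Longrightarrow> \<tau> \<le> s \<Longrightarrow> s \<le> t + e \<Longrightarrow>
      isCont (\<lambda>x. flow x \<tau>) x \<Longrightarrow> isCont (\<lambda>x. flow x s) x"
    using flow_continuity_propagates[OF step(1), of x] by blast
  have "isCont (\<lambda>x. flow x s) x" if "t < s" "s < t + e" for s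
    using propagate[of t s] step that \<open>e > 0\<close> by simp
  then show ?case using \<open>e > 0\<close> by blast
qed

definition basin :: "real \<Rightarrow> real \<Rightarrow> 'a set" where
  "basin \<delta> \<rho> = {x. \<exists>t\<ge>0. flow x t \<in> ball x0 \<delta> \<and> f (flow x t) \<in> ball (f x0) \<rho>}"

context
  fixes \<delta> \<rho> K g
  assumes loc: "local_inverse f x0 \<delta> \<rho> K g"
begin

lemma flow_trapped:
  assumes "0 \<le> t" "flow x t \<in> ball x0 \<delta>" "f (flow x t) \<in> ball (f x0) \<rho>" "t \<le> t'"
  shows "flow x t' = g (f (flow x t'))" and "f (flow x t') \<in> ball (f x0) \<rho>"
proof -
  have img: "f (flow x \<sigma>) \<in> ball (f x0) \<rho>" if "\<sigma> \<in> {t..t'}" for \<sigma>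
  proof -
    have "f (flow x \<sigma>) - f x0 = exp (- (\<sigma> - t)) *\<^sub>R (f (flow x t) - f x0)"
      using f_flow[of \<sigma> x] f_flow[of t x] that assms
      by (simp add: newton_image_minus_target exp_diff exp_minus field_simps)
    then have "norm (f (flow x \<sigma>) - f x0) \<le> norm (f (flow x t) - f x0)"
      using that by (simp add: mult_left_le_one_le)
    then show ?thesis using assms(3) by (simp add: dist_norm norm_minus_commute)
  qed
  have cont: "continuous_on {t..t'} (flow x)"
    using continuous_on_flow[of t' x] by (rule continuous_on_subset) (use assms in auto)
  show "flow x t' = g (f (flow x t'))"
    using lift_in_local_inverse[OF loc cont img assms(2), of t'] assms by simp
  show "f (flow x t') \<in> ball (f x0) \<rho>" using img assms by simp
qed

lemma inj_on_basin: "inj_on f (basin \<delta> \<rho>)"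
proof (rule inj_onI)
  fix a b assume "a \<in> basin \<delta> \<rho>" "b \<in> basin \<delta> \<rho>" "f a = f b"
  then obtain ta tb where "0 \<le> ta" "flow a ta \<in> ball x0 \<delta>" "f (flow a ta) \<in> ball (f x0) \<rho>"
    and "0 \<le> tb" "flow b tb \<in> ball x0 \<delta>" "f (flow b tb) \<in> ball (f x0) \<rho>"
    unfolding basin_def by blast
  define t where "t = max ta tb"
  have same_image: "f (flow a s) = f (flow b s)" if "0 \<le> s" for s
    using f_flow[OF that] \<open>f a = f b\<close> by (simp add: newton_image_def)
  have "flow a t = flow b t"
    using flow_trapped(1)[of ta a t] flow_trapped(1)[of tb b t] same_image[of t]
      \<open>0 \<le> ta\<close> \<open>0 \<le> tb\<close> \<open>flow a ta \<in> _\<close> \<open>flow b tb \<in> _\<close> \<open>f (flow a ta) \<in> _\<close> \<open>f (flow b tb) \<in> _\<close>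
    unfolding t_def by simp
  have "flow a 0 = flow b 0"
  proof (rule continuous_lifts_eq[OF locally_injective connected_Icc continuous_on_flow[of t a]
        continuous_on_flow[of t b]])
    show "f (flow a s) = f (flow b s)" if "s \<in> {0..t}" for s using same_image that by simp
    show "flow a t = flow b t" by fact
    show "t \<in> {0..t}" "0 \<in> {0..t}" using \<open>0 \<le> ta\<close> by (auto simp: t_def)
  qed
  then show "a = b" by simp
qed

lemma open_basin: "open (basin \<delta> \<rho>)"
proof -
  have "basin \<delta> \<rho> = (\<Union>t\<in>{0..}. (\<lambda>x. flow x t) -` (ball x0 \<delta> \<inter> f -` ball (f x0) \<rho>))"
    unfolding basin_def by auto
  moreover have "open ((\<lambda>x. flow x t) -` (ball x0 \<delta> \<inter> f -` ball (f x0) \<rho>))" if "t \<in> {0..}" for t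
  proof (rule open_vimage)
    show "open (ball x0 \<delta> \<inter> f -` ball (f x0) \<rho>)"
      by (rule open_Int[OF open_ball open_vimage[OF open_ball continuous_on_f]])
    show "continuous_on UNIV (\<lambda>x. flow x t)"
      using continuous_flow that by (simp add: continuous_at_imp_continuous_on)
  qed
  ultimately show ?thesis by auto
qed

lemma flow_in_basin_iff: "0 \<le> t \<Longrightarrow> flow x t \<in> basin \<delta> \<rho> \<longleftrightarrow> x \<in> basin \<delta> \<rho>"
proof
  assume "0 \<le> t" "flow x t \<in> basin \<delta> \<rho>"
  then obtain s where "0 \<le> s" "flow (flow x t) s \<in> ball x0 \<delta>" "f (flow (flow x t) s) \<in> ball (f x0) \<rho>"
    unfolding basin_def by blast
  then show "x \<in> basin \<delta> \<rho>"
    using flow_semigroup[OF \<open>0 \<le> t\<close> \<open>0 \<le> s\<close>] \<open>0 \<le> t\<close>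
    unfolding basin_def by (intro CollectI exI[of _ "t + s"]) simp
next
  assume "0 \<le> t" "x \<in> basin \<delta> \<rho>"
  then obtain s where "0 \<le> s" "flow x s \<in> ball x0 \<delta>" "f (flow x s) \<in> ball (f x0) \<rho>"
    unfolding basin_def by blast
  moreover have "flow (flow x t) s = flow x (t + s)" using flow_semigroup \<open>0 \<le> t\<close> \<open>0 \<le> s\<close> by simp
  moreover note trapped = flow_trapped[of s x "t + s"]
  ultimately have "f (flow (flow x t) s) \<in> ball (f x0) \<rho>" "flow (flow x t) s \<in> ball x0 \<delta>"
    using local_inverse_right[OF loc] \<open>0 \<le> t\<close> by (metis le_add_same_cancel2)+
  then show "flow x t \<in> basin \<delta> \<rho>"
    using \<open>0 \<le> s\<close> unfolding basin_def by blast
qed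

lemma closed_basin: "closed (basin \<delta> \<rho>)"
proof -
  have "x \<in> basin \<delta> \<rho>" if "x \<in> closure (basin \<delta> \<rho>)" for x
  proof -
    define t where "t = norm (f x - f x0) / \<rho>"
    have "0 \<le> t" using local_inverse_pos[OF loc] by (simp add: t_def)
    have "norm (f x - f x0) = \<rho> * t" using local_inverse_pos[OF loc] by (simp add: t_def)
    also have "\<dots> < \<rho> * exp t"
    proof -
      have "t < exp t" using exp_ge_add_one_self[of t] by linarith
      then show ?thesis using local_inverse_pos[OF loc] by simp
    qed
    finally have "norm (f x - f x0) < \<rho> * exp t" .
    moreover have "norm (f (flow x t) - f x0) = norm (f x - f x0) / exp t"
      using f_flow[OF \<open>0 \<le> t\<close>, of x] by (simp add: newton_image_minus_target exp_minus divide_inverse)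
    ultimately have "f (flow x t) \<in> ball (f x0) \<rho>"
      by (simp add: dist_norm norm_minus_commute pos_divide_less_eq)
    define w where "w = g (f (flow x t))"
    have "w \<in> ball x0 \<delta>" "f w = f (flow x t)"
      using local_inverse_right[OF loc \<open>f (flow x t) \<in> _\<close>] by (auto simp: w_def)
    then have "w \<in> basin \<delta> \<rho>"
      using \<open>f (flow x t) \<in> _\<close> unfolding basin_def by (intro CollectI exI[of _ 0]) auto
    have "(\<lambda>x. flow x t) ` closure (basin \<delta> \<rho>) \<subseteq> closure (basin \<delta> \<rho>)"
    proof (rule image_closure_subset)
      show "continuous_on (closure (basin \<delta> \<rho>)) (\<lambda>x. flow x t)"
        using continuous_flow[OF \<open>0 \<le> t\<close>] by (simp add: continuous_at_imp_continuous_on)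
      show "(\<lambda>x. flow x t) ` basin \<delta> \<rho> \<subseteq> closure (basin \<delta> \<rho>)"
        using flow_in_basin_iff[OF \<open>0 \<le> t\<close>] closure_subset by blast
    qed simp
    then have "flow x t = w"
      using inj_on_closure_fibre[OF open_basin inj_on_basin \<open>w \<in> basin \<delta> \<rho>\<close>] that \<open>f w = _\<close> by auto
    then show ?thesis
      using flow_in_basin_iff[OF \<open>0 \<le> t\<close>, of x] \<open>w \<in> basin \<delta> \<rho>\<close> by simp
  qed
  then show ?thesis using closure_subset_eq by blast
qed

lemma basin_eq_UNIV: "basin \<delta> \<rho> = UNIV"
proof -
  have "x0 \<in> basin \<delta> \<rho>"
    using local_inverse_pos[OF loc] unfolding basin_def by (intro CollectI exI[of _ 0]) auto
  then show ?thesis using clopen[of "basin \<delta> \<rho>"] open_basin closed_basin by blast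
qed

end

lemma inj_f: "inj f"
proof -
  obtain \<delta> \<rho> K g where "local_inverse f x0 \<delta> \<rho> K g"
    using local_inverse_exists[OF zero_less_one] by blast
  from inj_on_basin[OF this] basin_eq_UNIV[OF this] show ?thesis by simp
qed

end

theorem theorem2p1:
  fixes f :: "'a::banach \<Rightarrow> 'b::banach"
    and f' :: "'a \<Rightarrow> ('a \<Rightarrow>\<^sub>L 'b)"
  assumes deriv: "\<And>x. (f has_derivative blinfun_apply (f' x)) (at x)"
    and cont_deriv: "continuous_on UNIV f'"
    and isom: "\<And>x. is_isom (f' x)"
    and bdd_inv: "\<And>r. 0 < r \<Longrightarrow> bdd_above ((\<lambda>x. norm (blinfun_inv (f' x))) ` cball 0 r)"
    and cond3: "\<exists>x0 k. locally_lipschitz k \<and> coercive k \<and> (\<forall>x. k x \<ge> 0) \<and> has_right_dir_derivs k \<and>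
        bdd_above {right_dir_deriv k x v | x v. v = - blinfun_inv (f' x) (f x - f x0)}"
  shows "inj f \<and> open (range f) \<and>
         (\<exists>g. (\<forall>x. g (f x) = x) \<and> (\<forall>y\<in>range f. f (g y) = y) \<and> C1_on (range f) g) \<and>
         (\<forall>x0 k. locally_lipschitz k \<and> coercive k \<and> (\<forall>x. k x \<ge> 0) \<and> has_right_dir_derivs k \<and>
            bdd_above {right_dir_deriv k x v | x v. v = - blinfun_inv (f' x) (f x - f x0)} \<longrightarrow>
            (\<forall>y\<in>range f. \<forall>s\<in>{0..1}. f x0 + s *\<^sub>R (y - f x0) \<in> range f))"
proof -
  interpret isom_deriv_map f f' using assms by unfold_locales auto
  obtain x0 k where "locally_lipschitz k" "coercive k" "has_right_dir_derivs k"
    "bdd_above {right_dir_deriv k x v | x v. v = - blinfun_inv (f' x) (f x - f x0)}"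
    using cond3 by blast
  then interpret complete_newton_flow f f' x0 using newton_lifts_exist by unfold_locales
  show ?thesis
    using inj_f open_image[OF open_UNIV] inverse_C1[OF inj_f] range_star_shaped by blast
qed

end
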